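(* Let $(A,+,\circ)$ be a finite left brace with cyclic additive group, let $(A,\cdot)$ be its decomposable associated cycle set, let $g$ be an element of a transitive cycle base of $A$, and let $(A,\bullet)$ be the uniconnected associated cycle set $a\bullet b:=\lambda_a(g)^{-}\circ b$. Then $(A,\cdot)$ and $(A,\bullet)$ have finite multipermutation level and $mpl(A,\cdot)=mpl(A,\bullet)$. Moreover, for every $n\in\mathbb{N}$, the underlying sets of $\mathrm{Ret}^n(A,\cdot)$ and $\mathrm{Ret}^n(A,\bullet)$ coincide (as quotients of $A$).
   Context: A left brace is a set $A$ with two operations such that $(A,+)$ is an abelian group, $(A,\circ)$ is a group, and $a\circ(b+c)=a\circ b-a+a\circ c$. $\lambda_a(b):=-a+a\circ b$; $a\mapsto\lambda_a$ is a homomorphism $(A,\circ)\to\mathrm{Aut}(A,+)$. $a^{-}$ is the inverse in $(A,\circ)$. A transitive cycle base is a single $\lambda$-orbit generating $(A,+)$. A (non-degenerate) cycle set is a set $X$ with an operation such that each $\sigma_x:y\mapsto x\cdot y$ is bijective, $(x\cdot y)\cdot(x\cdot z)=(y\cdot x)\cdot(y\cdot z)$, and $x\mapsto x\cdot x$ is bijective. $\mathrm{Ret}(X)$ is the quotient cycle set of $X$ by $x\sim y\iff\sigma_x=\sigma_y$; $\mathrm{Ret}^0(X)=X$, $\mathrm{Ret}^i(X)=\mathrm{Ret}(\mathrm{Ret}^{i-1}(X))$; $mpl(X)$ is the least $n$ with $|\mathrm{Ret}^n(X)|=1$ (finite multipermutation level means such $n$ exists). The decomposable associated cycle set is $(A,\cdot)$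 with $a\cdot b:=\lambda_a^{-1}(b)$. The cycle set $(A,\bullet)$ is uniconnected, i.e. the group generated by its left multiplications acts regularly on $A$. *)

theory Defs
  imports "HOL-Algebra.Algebra"
begin

definition addG :: "'a set \<Rightarrow> ('a \<Rightarrow> 'a \<Rightarrow> 'a) \<Rightarrow> 'a \<Rightarrow> 'a monoid" where
  "addG A pl z = \<lparr>carrier = A, monoid.mult = pl, one = z\<rparr>"

definition circG :: "'a set \<Rightarrow> ('a \<Rightarrow> 'a \<Rightarrow> 'a) \<Rightarrow> 'a \<Rightarrow> 'a monoid" where
  "circG A circ u = \<lparr>carrier = A, monoid.mult = circ, one = u\<rparr>"

definition left_brace :: "'a set \<Rightarrow> ('a \<Rightarrow> 'a \<Rightarrow> 'a) \<Rightarrow> 'a \<Rightarrow> ('a \<Rightarrow> 'a \<Rightarrow> 'a) \<Rightarrow> 'a \<Rightarrow> bool" where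
  "left_brace A pl z circ u \<longleftrightarrow>
     comm_group (addG A pl z) \<and> group (circG A circ u) \<and>
     (\<forall>a\<in>A. \<forall>b\<in>A. \<forall>c\<in>A.
        circ a (pl b c) = pl (pl (circ a b) (inv\<^bsub>addG A pl z\<^esub> a)) (circ a c))"

definition brace_lambda :: "'a set \<Rightarrow> ('a \<Rightarrow> 'a \<Rightarrow> 'a) \<Rightarrow> 'a \<Rightarrow> ('a \<Rightarrow> 'a \<Rightarrow> 'a) \<Rightarrow> 'a \<Rightarrow> 'a \<Rightarrow> 'a" where
  "brace_lambda A pl z circ a b = pl (inv\<^bsub>addG A pl z\<^esub> a) (circ a b)"

definition transitive_cycle_base ::
  "'a set \<Rightarrow> ('a \<Rightarrow> 'a \<Rightarrow> 'a) \<Rightarrow> 'a \<Rightarrow> ('a \<Rightarrow> 'a \<Rightarrow> 'a) \<Rightarrow> 'a set \<Rightarrow> bool" where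
  "transitive_cycle_base A pl z circ S \<longleftrightarrow>
     S \<subseteq> A \<and> (\<exists>y\<in>S. S = (\<lambda>a. brace_lambda A pl z circ a y) ` A) \<and>
     generate (addG A pl z) S = A"

definition decomp_cs_op :: "'a set \<Rightarrow> ('a \<Rightarrow> 'a \<Rightarrow> 'a) \<Rightarrow> 'a \<Rightarrow> ('a \<Rightarrow> 'a \<Rightarrow> 'a) \<Rightarrow> 'a \<Rightarrow> 'a \<Rightarrow> 'a" where
  "decomp_cs_op A pl z circ a b = inv_into A (brace_lambda A pl z circ a) b"

definition unicon_cs_op ::
  "'a set \<Rightarrow> ('a \<Rightarrow> 'a \<Rightarrow> 'a) \<Rightarrow> 'a \<Rightarrow> ('a \<Rightarrow> 'a \<Rightarrow> 'a) \<Rightarrow> 'a \<Rightarrow> 'a \<Rightarrow> 'a \<Rightarrow> 'a \<Rightarrow> 'a" where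
  "unicon_cs_op A pl z circ u g a b =
     circ (inv\<^bsub>circG A circ u\<^esub> (brace_lambda A pl z circ a g)) b"

text \<open>A quotient cycle set of S is represented by a partition Q of S (a set of classes)
  together with the induced operation on classes.  Ret identifies classes with equal
  left multiplications; the new classes are unions of old classes, so Ret^n(S) is
  represented as a partition of S.\<close>

definition ret_class :: "'a set set \<Rightarrow> ('a set \<Rightarrow> 'a set \<Rightarrow> 'a set) \<Rightarrow> 'a set \<Rightarrow> 'a set" where
  "ret_class Q f C = \<Union>{D\<in>Q. \<forall>E\<in>Q. f D E = f C E}"

definition ret_step :: "'a set set \<times> ('a set \<Rightarrow> 'a set \<Rightarrow> 'a set)
    \<Rightarrow> 'a set set \<times> ('a set \<Rightarrow> 'a set \<Rightarrow> 'a set)" where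
  "ret_step P = (case P of (Q, f) \<Rightarrow>
     (ret_class Q f ` Q,
      \<lambda>C' D'. ret_class Q f (f (SOME C. C \<in> Q \<and> C \<subseteq> C') (SOME D. D \<in> Q \<and> D \<subseteq> D'))))"

fun Ret_iter :: "'a set \<Rightarrow> ('a \<Rightarrow> 'a \<Rightarrow> 'a) \<Rightarrow> nat
    \<Rightarrow> 'a set set \<times> ('a set \<Rightarrow> 'a set \<Rightarrow> 'a set)" where
  "Ret_iter S op 0 = ((\<lambda>x. {x}) ` S, \<lambda>C D. {op (SOME x. x \<in> C) (SOME y. y \<in> D)})"
| "Ret_iter S op (Suc n) = ret_step (Ret_iter S op n)"

definition finite_mpl :: "'a set \<Rightarrow> ('a \<Rightarrow> 'a \<Rightarrow> 'a) \<Rightarrow> bool" where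
  "finite_mpl S op \<longleftrightarrow> (\<exists>n. card (fst (Ret_iter S op n)) = 1)"

definition mpl :: "'a set \<Rightarrow> ('a \<Rightarrow> 'a \<Rightarrow> 'a) \<Rightarrow> nat" where
  "mpl S op = (LEAST n. card (fst (Ret_iter S op n)) = 1)"

end

theory Submission
  imports Defs
begin

(* For an ideal J of the brace write a ~J b when -a + b lies in J, and let K(J) be the set of x
   such that lambda_x(d) - d lies in J for all d.  As (A,+) is cyclic, the lambda_a commute; this
   makes K(J) again an ideal, so K^n({0}) is an increasing chain of ideals.
   Decomposable cycle set: a.c ~J b.c for all c iff lambda_a^- and lambda_b^- agree modulo J,
   i.e. iff a ~K(J) b.
   Uniconnected cycle set: a*c = lambda_a(g)^- o c, and ~J is a congruence of (A,o), so
   a*c ~J b*c for all c iff lambda_a(g) ~J lambda_b(g).  The elements on which lambda_a and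
   lambda_b agree modulo J form a lambda-invariant subgroup (the lambdas commute); if it contains
   g it contains the orbit of g, which generates (A,+).  So again this means a ~K(J) b.
   Hence Ret^n of both cycle sets is the quotient of A by ~K^n({0}).  Finally, if K(J) = J then
   a |-> lambda_a(g) induces an injective, hence bijective, self-map of A/J, so g lies in J and
   J = A: the chain reaches A, and both multipermutation levels are finite and equal. *)

section \<open>Retractions along a tower of congruences\<close>

definition represents_quotient ::
    "'a set \<Rightarrow> ('a \<Rightarrow> 'a \<Rightarrow> 'a) \<Rightarrow> 'a rel \<Rightarrow> 'a set set \<times> ('a set \<Rightarrow> 'a set \<Rightarrow> 'a set) \<Rightarrow> bool"
  where "represents_quotient A op r P \<longleftrightarrow> fst P = A // r \<and>
    (\<forall>a\<in>A. \<forall>c\<in>A. snd P (r `` {a}) (r `` {c}) = r `` {op a c})"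

lemma image_equiv_class_eq_quotient: "(\<lambda>a. r `` {a}) ` A = A // r"
  by (auto simp: quotient_def)

lemma represents_quotient_Ret_iter_0:
  assumes "\<And>a c. a \<in> A \<Longrightarrow> c \<in> A \<Longrightarrow> op a c \<in> A"
  shows "represents_quotient A op (Id_on A) (Ret_iter A op 0)"
proof -
  have classes: "Id_on A `` {a} = {a}" if "a \<in> A" for a
    using that by blast
  then have "A // Id_on A = (\<lambda>a. {a}) ` A"
    by (simp add: image_equiv_class_eq_quotient[symmetric])
  then show ?thesis
    using assms by (simp add: represents_quotient_def classes)
qed

lemma ret_class_quotient:
  assumes r: "equiv A r" and r': "equiv A r'" and "r \<subseteq> r'"
    and f: "\<And>a c. a \<in> A \<Longrightarrow> c \<in> A \<Longrightarrow> f (r `` {a}) (r `` {c}) = r `` {op a c}"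
    and r'_iff: "\<And>a b. a \<in> A \<Longrightarrow> b \<in> A \<Longrightarrow> (a, b) \<in> r' \<longleftrightarrow> (\<forall>c\<in>A. (op a c, op b c) \<in> r)"
    and a: "a \<in> A"
  shows "ret_class (A // r) f (r `` {a}) = r' `` {a}"
proof -
  have closed: "op b c \<in> A" if "b \<in> A" "c \<in> A" for b c
    using r'_iff[of b b] equiv_class_eq_iff[OF r'] equiv_class_eq_iff[OF r] that by blast
  define same_action where
    "same_action b \<longleftrightarrow> (\<forall>E\<in>A // r. f (r `` {b}) E = f (r `` {a}) E)" for b
  have "same_action b \<longleftrightarrow> (b, a) \<in> r'" if b: "b \<in> A" for b
    using r'_iff[OF b a] a b closed
    by (auto simp: same_action_def quotient_def f eq_equiv_class_iff[OF r])
  moreover have "b \<in> r' `` {a} \<longleftrightarrow> b \<in> A \<and> (b, a) \<in> r'" for b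
    using r' by (auto simp: equiv_def sym_def)
  ultimately have "{b \<in> A. same_action b} = r' `` {a}"
    by blast
  moreover have "{D \<in> A // r. P D} = (\<lambda>b. r `` {b}) ` {b \<in> A. P (r `` {b})}" for P
    unfolding quotient_def by blast
  ultimately have "{D \<in> A // r. \<forall>E\<in>A // r. f D E = f (r `` {a}) E} = (\<lambda>b. r `` {b}) ` (r' `` {a})"
    unfolding same_action_def by simp
  then have "ret_class (A // r) f (r `` {a}) = r `` (r' `` {a})"
    unfolding ret_class_def by (simp only: Image_eq_UN[of r "r' `` {a}"])
  also have "\<dots> = r' `` {a}"
    by (rule refines_equiv_class_eq[OF \<open>r \<subseteq> r'\<close> r r'])
  finally show ?thesis .
qed

lemma some_quotient_class_subset:
  assumes r: "equiv A r" and "r \<subseteq> r'" and b: "b \<in> A"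
  obtains b0 where "b0 \<in> A" "(SOME C. C \<in> A // r \<and> C \<subseteq> r' `` {b}) = r `` {b0}" "(b, b0) \<in> r'"
proof -
  let ?C = "SOME C. C \<in> A // r \<and> C \<subseteq> r' `` {b}"
  have "r `` {b} \<in> A // r \<and> r `` {b} \<subseteq> r' `` {b}"
    using b \<open>r \<subseteq> r'\<close> by (auto intro: quotientI)
  then have "?C \<in> A // r \<and> ?C \<subseteq> r' `` {b}"
    by (rule someI)
  then obtain b0 where "b0 \<in> A" "?C = r `` {b0}" "r `` {b0} \<subseteq> r' `` {b}"
    by (auto elim: quotientE)
  then show ?thesis
    using that equiv_class_self[OF r \<open>b0 \<in> A\<close>] by blast
qed

lemma represents_quotient_ret_step:
  assumes P: "represents_quotient A op r P"
    and r: "equiv A r" and r': "equiv A r'" and "r \<subseteq> r'"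
    and r'_iff: "\<And>a b. a \<in> A \<Longrightarrow> b \<in> A \<Longrightarrow> (a, b) \<in> r' \<longleftrightarrow> (\<forall>c\<in>A. (op a c, op b c) \<in> r)"
    and cong: "\<And>a a' c c'. (a, a') \<in> r' \<Longrightarrow> (c, c') \<in> r' \<Longrightarrow> (op a c, op a' c') \<in> r'"
  shows "represents_quotient A op r' (ret_step P)"
proof -
  obtain f where P_eq: "P = (A // r, f)"
    using P by (cases P) (simp add: represents_quotient_def)
  have f: "f (r `` {a}) (r `` {c}) = r `` {op a c}" if "a \<in> A" "c \<in> A" for a c
    using P that by (simp add: represents_quotient_def P_eq)
  have closed: "op a c \<in> A" if "a \<in> A" "c \<in> A" for a c
    using r'_iff[of a a] equiv_class_eq_iff[OF r'] equiv_class_eq_iff[OF r] that by blast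
  have ret_class_eq: "ret_class (A // r) f (r `` {a}) = r' `` {a}" if "a \<in> A" for a
    using ret_class_quotient[OF r r' \<open>r \<subseteq> r'\<close> f r'_iff that] by simp
  have "fst (ret_step P) = A // r'"
    using ret_class_eq by (simp add: ret_step_def P_eq image_equiv_class_eq_quotient[symmetric] image_image)
  moreover have "snd (ret_step P) (r' `` {a}) (r' `` {c}) = r' `` {op a c}"
    if a: "a \<in> A" and c: "c \<in> A" for a c
  proof -
    obtain a0 where a0: "a0 \<in> A" "(SOME C. C \<in> A // r \<and> C \<subseteq> r' `` {a}) = r `` {a0}" "(a, a0) \<in> r'"
      using some_quotient_class_subset[OF r \<open>r \<subseteq> r'\<close> a] .
    obtain c0 where c0: "c0 \<in> A" "(SOME C. C \<in> A // r \<and> C \<subseteq> r' `` {c}) = r `` {c0}" "(c, c0) \<in> r'"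
      using some_quotient_class_subset[OF r \<open>r \<subseteq> r'\<close> c] .
    have "snd (ret_step P) (r' `` {a}) (r' `` {c}) = r' `` {op a0 c0}"
      using a0 c0 by (simp add: ret_step_def P_eq f closed ret_class_eq)
    also have "\<dots> = r' `` {op a c}"
      using equiv_class_eq[OF r' cong[OF a0(3) c0(3)]] by simp
    finally show ?thesis .
  qed
  ultimately show ?thesis
    by (simp add: represents_quotient_def)
qed

locale retraction_tower =
  fixes A :: "'a set" and op :: "'a \<Rightarrow> 'a \<Rightarrow> 'a" and r :: "nat \<Rightarrow> 'a rel"
  assumes equiv: "equiv A (r n)"
    and r_0: "r 0 = Id_on A"
    and r_Suc: "a \<in> A \<Longrightarrow> b \<in> A \<Longrightarrow> (a, b) \<in> r (Suc n) \<longleftrightarrow> (\<forall>c\<in>A. (op a c, op b c) \<in> r n)"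
    and left_cong: "a \<in> A \<Longrightarrow> (c, c') \<in> r n \<Longrightarrow> (op a c, op a c') \<in> r n"
begin

lemma refl: "a \<in> A \<Longrightarrow> (a, a) \<in> r n"
  using equiv by (simp add: equiv_def refl_on_def)

lemma in_carrier: "(a, b) \<in> r n \<Longrightarrow> a \<in> A \<and> b \<in> A"
  using equiv_type[OF equiv] by blast

lemma op_closed: "a \<in> A \<Longrightarrow> c \<in> A \<Longrightarrow> op a c \<in> A"
  using in_carrier[OF left_cong[OF _ refl]] by blast

lemma mono: "r n \<subseteq> r (Suc n)"
proof (induction n)
  case 0
  show ?case
    using r_0 refl by (auto simp: Id_on_def)
next
  case (Suc n)
  show ?case
  proof clarify
    fix a b assume ab: "(a, b) \<in> r (Suc n)"
    then have "a \<in> A" "b \<in> A"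
      using in_carrier by blast+
    then show "(a, b) \<in> r (Suc (Suc n))"
      using ab Suc r_Suc[of a b n] r_Suc[of a b "Suc n"] by blast
  qed
qed

lemma cong: "(a, a') \<in> r n \<Longrightarrow> (c, c') \<in> r n \<Longrightarrow> (op a c, op a' c') \<in> r n"
proof -
  assume a: "(a, a') \<in> r n" and c: "(c, c') \<in> r n"
  have "(a, a') \<in> r (Suc n)" "c \<in> A"
    using mono in_carrier a c by blast+
  then have "(op a c, op a' c) \<in> r n"
    using r_Suc[of a a' n] in_carrier by blast
  moreover have "(op a' c, op a' c') \<in> r n"
    using left_cong in_carrier a c by blast
  ultimately show ?thesis
    using equiv by (meson equivE transD)
qed

theorem Ret_iter_eq_quotient: "fst (Ret_iter A op n) = A // r n"
proof -
  have "represents_quotient A op (r n) (Ret_iter A op n)"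
  proof (induction n)
    case 0
    show ?case
      using represents_quotient_Ret_iter_0[OF op_closed] r_0 by simp
  next
    case (Suc n)
    show ?case
      using represents_quotient_ret_step[OF Suc equiv equiv mono r_Suc cong] by simp
  qed
  then show ?thesis
    by (simp add: represents_quotient_def)
qed

end

section \<open>Left braces and their ideals\<close>

locale brace =
  fixes A :: "'a set" and pl :: "'a \<Rightarrow> 'a \<Rightarrow> 'a" and z :: 'a
    and circ :: "'a \<Rightarrow> 'a \<Rightarrow> 'a" and u :: 'a
  assumes left_brace: "left_brace A pl z circ u"
begin

abbreviation neg :: "'a \<Rightarrow> 'a" where "neg x \<equiv> inv\<^bsub>addG A pl z\<^esub> x"
abbreviation cinv :: "'a \<Rightarrow> 'a" where "cinv x \<equiv> inv\<^bsub>circG A circ u\<^esub> x"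
abbreviation lam :: "'a \<Rightarrow> 'a \<Rightarrow> 'a" where "lam \<equiv> brace_lambda A pl z circ"

sublocale additive: comm_group "addG A pl z"
  using left_brace unfolding left_brace_def by blast

sublocale circle: group "circG A circ u"
  using left_brace unfolding left_brace_def by blast

lemma addG_simps [simp]:
  "carrier (addG A pl z) = A" "monoid.mult (addG A pl z) = pl" "one (addG A pl z) = z"
  by (simp_all add: addG_def)

lemma circG_simps [simp]:
  "carrier (circG A circ u) = A" "monoid.mult (circG A circ u) = circ" "one (circG A circ u) = u"
  by (simp_all add: circG_def)

lemmas pl_closed [simp] = additive.m_closed[simplified]
lemmas zero_closed [simp] = additive.one_closed[simplified]
lemmas neg_closed [simp] = additive.inv_closed[simplified]
lemmas pl_assoc = additive.m_assoc[simplified]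
lemmas pl_comm = additive.m_comm[simplified]
lemmas pl_left_commute = additive.m_lcomm[simplified]
lemmas pl_ac = pl_assoc pl_comm pl_left_commute
lemmas pl_zero_left [simp] = additive.l_one[simplified]
lemmas pl_zero_right [simp] = additive.r_one[simplified]
lemmas neg_pl_self [simp] = additive.l_inv[simplified]
lemmas pl_neg_self [simp] = additive.r_inv[simplified]
lemmas neg_neg [simp] = additive.inv_inv[simplified]
lemmas neg_pl [simp] = additive.inv_mult[simplified]
lemmas neg_zero [simp] = additive.inv_one[simplified]

lemma neg_pl_cancel_left [simp]: "a \<in> A \<Longrightarrow> b \<in> A \<Longrightarrow> pl (neg a) (pl a b) = b"
  by (simp flip: pl_assoc)

lemma pl_neg_cancel_left [simp]: "a \<in> A \<Longrightarrow> b \<in> A \<Longrightarrow> pl a (pl (neg a) b) = b"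
  by (simp flip: pl_assoc)

lemmas circ_closed [simp] = circle.m_closed[simplified]
lemmas one_closed [simp] = circle.one_closed[simplified]
lemmas cinv_closed [simp] = circle.inv_closed[simplified]
lemmas circ_assoc [simp] = circle.m_assoc[simplified]
lemmas circ_one_left [simp] = circle.l_one[simplified]
lemmas circ_one_right [simp] = circle.r_one[simplified]
lemmas cinv_circ_self [simp] = circle.l_inv[simplified]
lemmas circ_cinv_self [simp] = circle.r_inv[simplified]
lemmas cinv_cinv [simp] = circle.inv_inv[simplified]
lemmas cinv_circ [simp] = circle.inv_mult_group[simplified]

lemma cinv_circ_cancel_left [simp]: "a \<in> A \<Longrightarrow> b \<in> A \<Longrightarrow> circ (cinv a) (circ a b) = b"
  by (simp flip: circ_assoc)

lemma circ_cinv_cancel_left [simp]: "a \<in> A \<Longrightarrow> b \<in> A \<Longrightarrow> circ a (circ (cinv a) b) = b"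
  by (simp flip: circ_assoc)

lemma brace_distrib:
  "a \<in> A \<Longrightarrow> b \<in> A \<Longrightarrow> c \<in> A \<Longrightarrow> circ a (pl b c) = pl (pl (circ a b) (neg a)) (circ a c)"
  using left_brace unfolding left_brace_def by simp

lemma circ_zero_right [simp]: "a \<in> A \<Longrightarrow> circ a z = a"
proof -
  assume a: "a \<in> A"
  have "pl (circ a z) z = pl (circ a z) (pl (neg a) (circ a z))"
    using brace_distrib[OF a zero_closed zero_closed] a by (simp add: pl_assoc)
  then have "pl (neg a) (circ a z) = z"
    using a by (metis additive.l_cancel_one'[simplified] circ_closed neg_closed pl_closed zero_closed)
  then show ?thesis
    using a by (metis pl_neg_cancel_left pl_zero_right circ_closed zero_closed)
qed

lemma zero_eq_one: "z = u"
  by (metis circ_zero_right circ_one_left one_closed zero_closed)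

lemma lam_eq: "lam a b = pl (neg a) (circ a b)"
  by (simp add: brace_lambda_def)

lemma lam_closed [simp]: "a \<in> A \<Longrightarrow> b \<in> A \<Longrightarrow> lam a b \<in> A"
  by (simp add: lam_eq)

lemma circ_eq_pl_lam: "a \<in> A \<Longrightarrow> b \<in> A \<Longrightarrow> circ a b = pl a (lam a b)"
  by (simp add: lam_eq)

lemma lam_pl: "a \<in> A \<Longrightarrow> b \<in> A \<Longrightarrow> c \<in> A \<Longrightarrow> lam a (pl b c) = pl (lam a b) (lam a c)"
  by (simp add: lam_eq brace_distrib pl_ac)

lemma lam_zero [simp]: "a \<in> A \<Longrightarrow> lam a z = z"
  by (simp add: lam_eq)

lemma lam_neg: "a \<in> A \<Longrightarrow> b \<in> A \<Longrightarrow> lam a (neg b) = neg (lam a b)"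
  by (metis additive.inv_equality[simplified] lam_closed lam_pl lam_zero neg_closed neg_pl_self)

lemma lam_one [simp]: "c \<in> A \<Longrightarrow> lam u c = c"
  by (metis lam_eq circ_one_left neg_zero pl_zero_left zero_eq_one)

lemma lam_zero_left [simp]: "c \<in> A \<Longrightarrow> lam z c = c"
  using lam_one[of c, folded zero_eq_one] .

lemma lam_circ:
  assumes "a \<in> A" "b \<in> A" "c \<in> A"
  shows "lam (circ a b) c = lam a (lam b c)"
proof -
  have "circ (circ a b) c = circ a (pl b (lam b c))"
    using assms by (simp add: circ_eq_pl_lam[of b c])
  also have "\<dots> = pl (circ a b) (lam a (lam b c))"
    using assms by (simp add: brace_distrib pl_assoc lam_eq[of a "lam b c"])
  finally show ?thesis
    using assms by (simp add: lam_eq[of "circ a b" c])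
qed

lemma lam_cinv_lam [simp]: "a \<in> A \<Longrightarrow> c \<in> A \<Longrightarrow> lam (cinv a) (lam a c) = c"
  by (metis lam_circ cinv_closed cinv_circ_self lam_one)

lemma lam_lam_cinv [simp]: "a \<in> A \<Longrightarrow> c \<in> A \<Longrightarrow> lam a (lam (cinv a) c) = c"
  by (metis lam_circ cinv_closed circ_cinv_self lam_one)

lemma lam_self_cinv: "a \<in> A \<Longrightarrow> lam a (cinv a) = neg a"
  by (metis lam_eq circ_cinv_self pl_zero_right neg_closed zero_eq_one)

lemma lam_hom: "a \<in> A \<Longrightarrow> lam a \<in> hom (addG A pl z) (addG A pl z)"
  by (auto simp: hom_def lam_pl)

lemma inj_on_lam: "a \<in> A \<Longrightarrow> inj_on (lam a) A"
  by (metis inj_onI lam_cinv_lam)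

lemma decomp_cs_op_eq: "a \<in> A \<Longrightarrow> b \<in> A \<Longrightarrow> decomp_cs_op A pl z circ a b = lam (cinv a) b"
  unfolding decomp_cs_op_def by (rule inv_into_f_eq[OF inj_on_lam]) simp_all

lemma conj_eq_lam:
  assumes c: "c \<in> A" and x: "x \<in> A"
  shows "circ (circ c x) (cinv c) = pl (lam c x) (lam c (pl (lam x (cinv c)) (neg (cinv c))))"
proof -
  have "circ (circ c x) (cinv c) = circ c (circ x (cinv c))"
    using assms by simp
  also have "\<dots> = circ c (pl x (lam x (cinv c)))"
    using assms circ_eq_pl_lam[of x "cinv c"] by simp
  also have "\<dots> = pl c (lam c (pl x (lam x (cinv c))))"
    using assms by (simp add: circ_eq_pl_lam[of c "pl x (lam x (cinv c))"])
  finally have "circ (circ c x) (cinv c) = pl c (lam c (pl x (lam x (cinv c))))" .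
  then show ?thesis
    using assms by (simp add: lam_pl lam_neg lam_self_cinv pl_ac)
qed

definition lam_ker_mod :: "'a set \<Rightarrow> 'a set" where
  "lam_ker_mod J = {x \<in> A. \<forall>d\<in>A. pl (lam x d) (neg d) \<in> J}"

(* For left ideals the last clause is equivalent to normality in (A, circ) (cf. ideal_conj),
   so these are exactly the ideals of the brace. *)
definition brace_ideal :: "'a set \<Rightarrow> bool" where
  "brace_ideal J \<longleftrightarrow> J \<subseteq> A \<and> z \<in> J \<and> (\<forall>x\<in>J. \<forall>y\<in>J. pl x y \<in> J) \<and> (\<forall>x\<in>J. neg x \<in> J) \<and>
     (\<forall>c\<in>A. \<forall>x\<in>J. lam c x \<in> J) \<and> J \<subseteq> lam_ker_mod J"

definition mod_rel :: "'a set \<Rightarrow> 'a rel" where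
  "mod_rel J = {(a, b). a \<in> A \<and> b \<in> A \<and> pl (neg a) b \<in> J}"

lemma lam_ker_mod_subset: "lam_ker_mod J \<subseteq> A"
  by (auto simp: lam_ker_mod_def)

lemma brace_ideal_zero: "brace_ideal {z}"
  by (auto simp: brace_ideal_def lam_ker_mod_def)

lemma mod_rel_zero: "mod_rel {z} = Id_on A"
  by (auto simp: mod_rel_def Id_on_def) (metis pl_neg_cancel_left pl_zero_right)

lemma mod_rel_carrier: "mod_rel A = A \<times> A"
  by (auto simp: mod_rel_def)

context
  fixes J assumes J: "brace_ideal J"
begin

lemma ideal_subset: "x \<in> J \<Longrightarrow> x \<in> A"
  using J by (auto simp: brace_ideal_def)

lemma ideal_zero: "z \<in> J"
  using J by (simp add: brace_ideal_def)

lemma ideal_pl: "x \<in> J \<Longrightarrow> y \<in> J \<Longrightarrow> pl x y \<in> J"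
  using J by (simp add: brace_ideal_def)

lemma ideal_neg: "x \<in> J \<Longrightarrow> neg x \<in> J"
  using J by (simp add: brace_ideal_def)

lemma ideal_lam: "c \<in> A \<Longrightarrow> x \<in> J \<Longrightarrow> lam c x \<in> J"
  using J by (simp add: brace_ideal_def)

lemma ideal_lam_diff: "x \<in> J \<Longrightarrow> d \<in> A \<Longrightarrow> pl (lam x d) (neg d) \<in> J"
  using J by (auto simp: brace_ideal_def lam_ker_mod_def)

lemma ideal_lam_iff: "c \<in> A \<Longrightarrow> x \<in> A \<Longrightarrow> lam c x \<in> J \<longleftrightarrow> x \<in> J"
  by (metis ideal_lam cinv_closed lam_cinv_lam)

lemma ideal_neg_iff: "x \<in> A \<Longrightarrow> neg x \<in> J \<longleftrightarrow> x \<in> J"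
  by (metis ideal_neg neg_neg)

lemma ideal_cinv: "x \<in> J \<Longrightarrow> cinv x \<in> J"
  using ideal_lam[of "cinv x" x] lam_self_cinv[of "cinv x"] ideal_neg_iff[of "cinv x"]
  by (simp add: ideal_subset)

lemma ideal_conj: "c \<in> A \<Longrightarrow> x \<in> J \<Longrightarrow> circ (circ c x) (cinv c) \<in> J"
  by (subst conj_eq_lam) (simp_all add: ideal_subset ideal_pl ideal_lam ideal_lam_diff)

lemma ideal_subgroup: "subgroup J (addG A pl z)"
  by (rule additive.subgroupI) (use ideal_zero in \<open>auto simp: ideal_subset ideal_pl ideal_neg\<close>)

lemma equiv_mod_rel: "equiv A (mod_rel J)"
proof (rule equivI)
  show "refl_on A (mod_rel J)"
    by (auto simp: refl_on_def mod_rel_def ideal_zero)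
  show "sym (mod_rel J)"
    unfolding sym_def mod_rel_def using ideal_neg by (fastforce simp: pl_comm)
  show "trans (mod_rel J)"
    unfolding trans_def mod_rel_def
    by (auto dest: ideal_pl simp: pl_assoc)
qed (auto simp: mod_rel_def)

lemma mod_rel_iff_circ: "(a, b) \<in> mod_rel J \<longleftrightarrow> a \<in> A \<and> b \<in> A \<and> circ (cinv a) b \<in> J"
proof -
  have "pl (neg a) b \<in> J \<longleftrightarrow> circ (cinv a) b \<in> J" if "a \<in> A" "b \<in> A"
    using that ideal_lam_iff[of a "circ (cinv a) b"] by (simp add: lam_eq)
  then show ?thesis
    unfolding mod_rel_def by auto
qed

lemma mod_rel_lam: "a \<in> A \<Longrightarrow> (c, c') \<in> mod_rel J \<Longrightarrow> (lam a c, lam a c') \<in> mod_rel J"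
  unfolding mod_rel_def using ideal_lam[of a "pl (neg c) c'"] by (auto simp: lam_pl lam_neg)

lemma mod_rel_circ_left: "a \<in> A \<Longrightarrow> (c, c') \<in> mod_rel J \<Longrightarrow> (circ a c, circ a c') \<in> mod_rel J"
  by (simp add: mod_rel_iff_circ)

lemma mod_rel_circ_right: "a \<in> A \<Longrightarrow> (c, c') \<in> mod_rel J \<Longrightarrow> (circ c a, circ c' a) \<in> mod_rel J"
  using ideal_conj[of "cinv a" "circ (cinv c) c'"] by (simp add: mod_rel_iff_circ)

lemma mod_rel_circ_right_iff:
  "p \<in> A \<Longrightarrow> q \<in> A \<Longrightarrow> (\<forall>c\<in>A. (circ p c, circ q c) \<in> mod_rel J) \<longleftrightarrow> (p, q) \<in> mod_rel J"
  using mod_rel_circ_right by (metis circ_one_right one_closed)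

lemma mod_rel_cinv: "(a, b) \<in> mod_rel J \<Longrightarrow> (cinv a, cinv b) \<in> mod_rel J"
  using ideal_conj[of a "cinv (circ (cinv a) b)"] ideal_cinv[of "circ (cinv a) b"]
  by (simp add: mod_rel_iff_circ)

lemma mod_rel_pl: "(a, b) \<in> mod_rel J \<Longrightarrow> (a', b') \<in> mod_rel J \<Longrightarrow> (pl a a', pl b b') \<in> mod_rel J"
  unfolding mod_rel_def using ideal_pl[of "pl (neg a) b" "pl (neg a') b'"] by (auto simp: pl_ac)

lemma mod_rel_neg: "(a, b) \<in> mod_rel J \<Longrightarrow> (neg a, neg b) \<in> mod_rel J"
  unfolding mod_rel_def using ideal_neg[of "pl (neg a) b"] by (auto simp: pl_comm)

lemma mod_rel_cinv_iff: "a \<in> A \<Longrightarrow> b \<in> A \<Longrightarrow> (cinv a, cinv b) \<in> mod_rel J \<longleftrightarrow> (a, b) \<in> mod_rel J"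
  using mod_rel_cinv[of "cinv a" "cinv b"] mod_rel_cinv[of a b] by auto

lemma mod_rel_lam_iff:
  assumes a: "a \<in> A" and b: "b \<in> A"
  shows "(\<forall>c\<in>A. (lam a c, lam b c) \<in> mod_rel J) \<longleftrightarrow> circ (cinv a) b \<in> lam_ker_mod J"
proof -
  have "pl (neg (lam a c)) (lam b c) = lam a (pl (lam (circ (cinv a) b) c) (neg c))" if c: "c \<in> A" for c
    using a b c by (simp add: lam_pl lam_neg lam_circ pl_comm)
  then show ?thesis
    using a b by (simp add: mod_rel_def lam_ker_mod_def ideal_lam_iff)
qed

end

end

section \<open>Braces with commuting lambda maps\<close>

lemma (in group) cyclic_group_endomorphisms_commute:
  assumes "cyclic_group G" "f \<in> hom G G" "h \<in> hom G G" "x \<in> carrier G"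
  shows "f (h x) = h (f x)"
proof -
  obtain y where y: "y \<in> carrier G" and gen: "carrier G = range (\<lambda>n::int. y [^] n)"
    using assms(1) cyclic_group by blast
  have scalar: "\<exists>k::int. \<forall>n::int. \<phi> (y [^] n) = y [^] (k * n)" if \<phi>: "\<phi> \<in> hom G G" for \<phi>
  proof -
    obtain k :: int where "\<phi> y = y [^] k"
      using gen hom_in_carrier[OF \<phi> y] by auto
    then show ?thesis
      using hom_int_pow[OF \<phi> y is_group is_group] int_pow_pow[OF y] by auto
  qed
  obtain k where k: "\<And>n::int. f (y [^] n) = y [^] (k * n)" using scalar assms(2) by blast
  obtain m where m: "\<And>n::int. h (y [^] n) = y [^] (m * n)" using scalar assms(3) by blast
  obtain j :: int where "x = y [^] j" using gen assms(4) by auto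
  then show ?thesis by (simp add: k m ac_simps)
qed

locale lam_commutative_brace = brace +
  assumes lam_commute: "a \<in> A \<Longrightarrow> b \<in> A \<Longrightarrow> d \<in> A \<Longrightarrow> lam a (lam b d) = lam b (lam a d)"
begin

context
  fixes J assumes J: "brace_ideal J"
begin

lemma lam_ker_mod_circ:
  assumes x: "x \<in> lam_ker_mod J" and y: "y \<in> lam_ker_mod J"
  shows "circ x y \<in> lam_ker_mod J"
proof -
  have "pl (lam (circ x y) d) (neg d) \<in> J" if d: "d \<in> A" for d
  proof -
    have xA: "x \<in> A" and yA: "y \<in> A"
      using x y lam_ker_mod_subset by blast+
    have "pl (lam (circ x y) d) (neg d) = pl (lam x (pl (lam y d) (neg d))) (pl (lam x d) (neg d))"
      using xA yA d by (simp add: lam_circ lam_pl lam_neg pl_assoc)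
    moreover have "pl (lam y d) (neg d) \<in> J" "pl (lam x d) (neg d) \<in> J"
      using x y d by (auto simp: lam_ker_mod_def)
    ultimately show ?thesis
      using xA by (simp add: ideal_pl[OF J] ideal_lam[OF J])
  qed
  then show ?thesis
    using x y by (simp add: lam_ker_mod_def)
qed

lemma lam_ker_mod_cinv:
  assumes x: "x \<in> lam_ker_mod J"
  shows "cinv x \<in> lam_ker_mod J"
proof -
  have xA: "x \<in> A"
    using x lam_ker_mod_subset by blast
  have "pl (lam (cinv x) d) (neg d) \<in> J" if d: "d \<in> A" for d
  proof -
    define e where "e = lam (cinv x) d"
    have e: "e \<in> A" "d = lam x e"
      using xA d by (simp_all add: e_def)
    have "neg (pl (lam x e) (neg e)) \<in> J"
      using x e(1) ideal_neg[OF J] unfolding lam_ker_mod_def by blast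
    then show ?thesis
      using e xA by (simp add: pl_comm e_def[symmetric])
  qed
  then show ?thesis
    using xA by (simp add: lam_ker_mod_def)
qed

lemma lam_ker_mod_pl_ideal:
  assumes w: "w \<in> lam_ker_mod J" and s: "s \<in> J"
  shows "pl w s \<in> lam_ker_mod J"
proof -
  have wA: "w \<in> A" and sA: "s \<in> A"
    using w lam_ker_mod_subset ideal_subset[OF J s] by blast+
  have "lam (cinv w) s \<in> lam_ker_mod J"
    using J ideal_lam[OF J _ s] wA by (auto simp: brace_ideal_def)
  moreover have "circ w (lam (cinv w) s) = pl w s"
    using wA sA by (simp add: circ_eq_pl_lam)
  ultimately show ?thesis
    using lam_ker_mod_circ[OF w] by metis
qed

lemma lam_ker_mod_lam:
  assumes c: "c \<in> A" and x: "x \<in> lam_ker_mod J"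
  shows "lam c x \<in> lam_ker_mod J"
proof -
  \<comment> \<open>The conjugate w of x acts like x since the lambdas commute, and it differs from
    lam c x by an element of J.\<close>
  have xA: "x \<in> A"
    using x lam_ker_mod_subset by blast
  define t where "t = pl (lam x (cinv c)) (neg (cinv c))"
  have t: "t \<in> J"
    using x c by (auto simp: lam_ker_mod_def t_def)
  define w where "w = circ (circ c x) (cinv c)"
  have "lam w d = lam x d" if "d \<in> A" for d
    using c xA that by (simp add: w_def lam_circ lam_commute[of c x])
  then have w: "w \<in> lam_ker_mod J"
    using x c xA by (simp add: lam_ker_mod_def w_def)
  have "w = pl (lam c x) (lam c t)"
    unfolding w_def t_def by (rule conj_eq_lam[OF c xA])
  then have "lam c x = pl w (neg (lam c t))"
    using c xA ideal_subset[OF J t] by (simp add: pl_assoc)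
  then show ?thesis
    using lam_ker_mod_pl_ideal[OF w] ideal_neg[OF J] ideal_lam[OF J c t] by simp
qed

lemma brace_ideal_lam_ker_mod: "brace_ideal (lam_ker_mod J)"
proof -
  let ?K = "lam_ker_mod J"
  have zero: "z \<in> ?K"
    using ideal_zero[OF J] by (simp add: lam_ker_mod_def)
  have pl: "pl x y \<in> ?K" if x: "x \<in> ?K" and y: "y \<in> ?K" for x y
  proof -
    have "x \<in> A" "y \<in> A"
      using x y lam_ker_mod_subset by blast+
    then have "pl x y = circ x (lam (cinv x) y)"
      by (simp add: circ_eq_pl_lam)
    then show ?thesis
      using lam_ker_mod_circ[OF x lam_ker_mod_lam[OF _ y]] \<open>x \<in> A\<close> by simp
  qed
  have neg: "neg x \<in> ?K" if x: "x \<in> ?K" for x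
  proof -
    have "x \<in> A"
      using x lam_ker_mod_subset by blast
    then show ?thesis
      using lam_ker_mod_lam[OF _ lam_ker_mod_cinv[OF x]] lam_self_cinv by metis
  qed
  have "?K \<subseteq> lam_ker_mod ?K"
    using J by (auto simp: lam_ker_mod_def brace_ideal_def)
  then show ?thesis
    using lam_ker_mod_subset zero pl neg lam_ker_mod_lam by (simp add: brace_ideal_def)
qed

lemma mod_rel_lam_ker_mod_iff:
  assumes "a \<in> A" "b \<in> A"
  shows "(a, b) \<in> mod_rel (lam_ker_mod J) \<longleftrightarrow> (\<forall>c\<in>A. (lam a c, lam b c) \<in> mod_rel J)"
  using assms mod_rel_iff_circ[OF brace_ideal_lam_ker_mod] mod_rel_lam_iff[OF J] by simp

end

primrec lam_ker_series :: "nat \<Rightarrow> 'a set" where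
  "lam_ker_series 0 = {z}"
| "lam_ker_series (Suc n) = lam_ker_mod (lam_ker_series n)"

lemma brace_ideal_lam_ker_series: "brace_ideal (lam_ker_series n)"
  by (induction n) (simp_all add: brace_ideal_zero brace_ideal_lam_ker_mod)

theorem Ret_iter_decomp_cs_op:
  "fst (Ret_iter A (decomp_cs_op A pl z circ) n) = A // mod_rel (lam_ker_series n)"
proof (rule retraction_tower.Ret_iter_eq_quotient, unfold_locales)
  fix n a b
  assume "a \<in> A" "b \<in> A"
  then show "(a, b) \<in> mod_rel (lam_ker_series (Suc n)) \<longleftrightarrow>
      (\<forall>c\<in>A. (decomp_cs_op A pl z circ a c, decomp_cs_op A pl z circ b c) \<in> mod_rel (lam_ker_series n))"
    using mod_rel_cinv_iff[OF brace_ideal_lam_ker_series[of "Suc n"]]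
      mod_rel_lam_ker_mod_iff[OF brace_ideal_lam_ker_series[of n]]
    by (simp add: decomp_cs_op_eq)
next
  fix n a c c'
  assume a: "a \<in> A" and cc': "(c, c') \<in> mod_rel (lam_ker_series n)"
  then have "c \<in> A" "c' \<in> A"
    by (auto simp: mod_rel_def)
  then show "(decomp_cs_op A pl z circ a c, decomp_cs_op A pl z circ a c') \<in> mod_rel (lam_ker_series n)"
    using mod_rel_lam[OF brace_ideal_lam_ker_series cinv_closed[OF a] cc'] a
    by (simp add: decomp_cs_op_eq)
qed (simp_all add: equiv_mod_rel brace_ideal_lam_ker_series mod_rel_zero)

end

section \<open>Transitive cycle bases\<close>

lemma card_image_eq_if_same_fibres:
  assumes "\<And>a b. a \<in> A \<Longrightarrow> b \<in> A \<Longrightarrow> f a = f b \<longleftrightarrow> h a = h b"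
  shows "card (f ` A) = card (h ` A)"
proof (rule bij_betw_same_card[of "\<lambda>K. f (inv_into A h K)", symmetric])
  show "bij_betw (\<lambda>K. f (inv_into A h K)) (h ` A) (f ` A)"
    unfolding bij_betw_def inj_on_def
    by (auto simp: image_iff assms inv_into_into f_inv_into_f) (metis imageI inv_into_into)
qed

locale cycle_base_brace = lam_commutative_brace +
  fixes S :: "'a set" and g :: 'a
  assumes cycle_base: "transitive_cycle_base A pl z circ S" and g_in_S: "g \<in> S"
begin

lemma g_in_A: "g \<in> A"
  using cycle_base g_in_S by (auto simp: transitive_cycle_base_def)

lemma cycle_base_eq_orbit: "S = (\<lambda>c. lam c g) ` A"
proof -
  obtain y where y: "y \<in> A" "S = (\<lambda>a. lam a y) ` A"
    using cycle_base by (auto simp: transitive_cycle_base_def)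
  then obtain a0 where a0: "a0 \<in> A" "g = lam a0 y"
    using g_in_S by blast
  show ?thesis
  proof (intro equalityI subsetI)
    fix s assume "s \<in> S"
    then obtain a where a: "a \<in> A" "s = lam a y"
      using y by blast
    then have "s = lam (circ a (cinv a0)) g"
      using a0 y by (simp add: lam_circ)
    then show "s \<in> (\<lambda>c. lam c g) ` A"
      using a a0 by simp
  next
    fix s assume "s \<in> (\<lambda>c. lam c g) ` A"
    then obtain c where c: "c \<in> A" "s = lam c g"
      by blast
    then have "s = lam (circ c a0) y"
      using a0 y by (simp add: lam_circ)
    then show "s \<in> S"
      using c a0 y by simp
  qed
qed

lemma lam_invariant_subgroup_eq_carrier:
  assumes T: "subgroup T (addG A pl z)" and g: "g \<in> T"
    and lam_T: "\<And>c x. c \<in> A \<Longrightarrow> x \<in> T \<Longrightarrow> lam c x \<in> T"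
  shows "T = A"
proof -
  have "S \<subseteq> T"
    using g lam_T by (auto simp: cycle_base_eq_orbit)
  then have "generate (addG A pl z) S \<subseteq> T"
    using additive.generate_subgroup_incl T by blast
  moreover have "generate (addG A pl z) S = A"
    using cycle_base by (simp add: transitive_cycle_base_def)
  ultimately show ?thesis
    using subgroup.subset[OF T] by simp
qed

lemma mod_rel_lam_generator_iff:
  assumes J: "brace_ideal J" and a: "a \<in> A" and b: "b \<in> A"
  shows "(lam a g, lam b g) \<in> mod_rel J \<longleftrightarrow> (\<forall>c\<in>A. (lam a c, lam b c) \<in> mod_rel J)"
proof
  assume g_rel: "(lam a g, lam b g) \<in> mod_rel J"
  let ?T = "{d \<in> A. (lam a d, lam b d) \<in> mod_rel J}"
  have "subgroup ?T (addG A pl z)"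
  proof (rule additive.subgroupI)
    show "?T \<noteq> {}" using g_rel g_in_A by blast
  qed (auto simp: a b lam_pl lam_neg intro: mod_rel_pl[OF J] mod_rel_neg[OF J])
  moreover have "lam c d \<in> ?T" if "c \<in> A" "d \<in> ?T" for c d
    using that a b mod_rel_lam[OF J, of c "lam a d" "lam b d"] by (simp add: lam_commute)
  ultimately have "?T = A"
    using g_rel g_in_A by (intro lam_invariant_subgroup_eq_carrier) auto
  then show "\<forall>c\<in>A. (lam a c, lam b c) \<in> mod_rel J"
    by blast
qed (use g_in_A in blast)

lemma mod_rel_lam_ker_mod_iff_generator:
  assumes "brace_ideal J" "a \<in> A" "b \<in> A"
  shows "(a, b) \<in> mod_rel (lam_ker_mod J) \<longleftrightarrow> (lam a g, lam b g) \<in> mod_rel J"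
  using assms by (simp add: mod_rel_lam_ker_mod_iff mod_rel_lam_generator_iff)

theorem Ret_iter_unicon_cs_op:
  "fst (Ret_iter A (unicon_cs_op A pl z circ u g) n) = A // mod_rel (lam_ker_series n)"
proof (rule retraction_tower.Ret_iter_eq_quotient, unfold_locales)
  fix n a b
  assume "a \<in> A" "b \<in> A"
  then show "(a, b) \<in> mod_rel (lam_ker_series (Suc n)) \<longleftrightarrow>
      (\<forall>c\<in>A. (unicon_cs_op A pl z circ u g a c, unicon_cs_op A pl z circ u g b c)
        \<in> mod_rel (lam_ker_series n))"
    using g_in_A brace_ideal_lam_ker_series[of n]
    by (simp add: unicon_cs_op_def mod_rel_circ_right_iff mod_rel_lam_ker_mod_iff_generator
        mod_rel_cinv_iff)
next
  fix n a c c'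
  assume "a \<in> A" "(c, c') \<in> mod_rel (lam_ker_series n)"
  then show "(unicon_cs_op A pl z circ u g a c, unicon_cs_op A pl z circ u g a c')
      \<in> mod_rel (lam_ker_series n)"
    using g_in_A by (simp add: unicon_cs_op_def mod_rel_circ_left brace_ideal_lam_ker_series)
qed (simp_all add: equiv_mod_rel brace_ideal_lam_ker_series mod_rel_zero)

lemma lam_ker_mod_eq_self_imp_carrier:
  assumes fin: "finite A" and J: "brace_ideal J" and fixed: "lam_ker_mod J = J"
  shows "J = A"
proof -
  let ?r = "mod_rel J"
  have "?r `` {lam a g} = ?r `` {lam b g} \<longleftrightarrow> ?r `` {a} = ?r `` {b}" if "a \<in> A" "b \<in> A" for a b
    using that g_in_A mod_rel_lam_ker_mod_iff_generator[OF J, of a b]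
    by (simp add: fixed eq_equiv_class_iff[OF equiv_mod_rel[OF J]])
  then have "card ((\<lambda>a. ?r `` {lam a g}) ` A) = card ((\<lambda>a. ?r `` {a}) ` A)"
    by (rule card_image_eq_if_same_fibres)
  moreover have "(\<lambda>a. ?r `` {lam a g}) ` A \<subseteq> (\<lambda>a. ?r `` {a}) ` A"
    using g_in_A by auto
  ultimately have "(\<lambda>a. ?r `` {lam a g}) ` A = (\<lambda>a. ?r `` {a}) ` A"
    using fin by (simp add: card_subset_eq)
  then obtain a where a: "a \<in> A" "?r `` {lam a g} = ?r `` {z}"
    by (metis (no_types, lifting) imageE imageI zero_closed)
  then have "(lam a g, z) \<in> ?r"
    using g_in_A eq_equiv_class_iff[OF equiv_mod_rel[OF J], of "lam a g" z] by simp
  then have "neg (lam a g) \<in> J"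
    using a g_in_A by (simp add: mod_rel_def)
  then have "g \<in> J"
    using a g_in_A by (simp add: ideal_neg_iff[OF J] ideal_lam_iff[OF J])
  then show ?thesis
    using J by (intro lam_invariant_subgroup_eq_carrier) (simp_all add: ideal_subgroup ideal_lam)
qed

lemma lam_ker_series_eventually_carrier:
  assumes fin: "finite A"
  shows "\<exists>n. lam_ker_series n = A"
proof -
  have subset_A: "lam_ker_series n \<subseteq> A" for n
    using ideal_subset[OF brace_ideal_lam_ker_series] by blast
  have grows: "lam_ker_series n \<subseteq> lam_ker_series (Suc n)" for n
    using brace_ideal_lam_ker_series[of n] by (simp add: brace_ideal_def)
  have "lam_ker_series n = A \<or> n < card (lam_ker_series n)" for n
  proof (induction n)
    case 0
    show ?case by simp
  next
    case (Suc n)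
    show ?case
    proof (cases "lam_ker_series n = A")
      case True
      then show ?thesis
        using grows[of n] subset_A[of "Suc n"] by blast
    next
      case False
      then have "lam_ker_series n \<subset> lam_ker_series (Suc n)"
        using grows[of n] lam_ker_mod_eq_self_imp_carrier[OF fin brace_ideal_lam_ker_series[of n]]
        by auto
      then have "card (lam_ker_series n) < card (lam_ker_series (Suc n))"
        using finite_subset[OF subset_A fin] by (rule psubset_card_mono[rotated])
      then show ?thesis
        using Suc False by simp
    qed
  qed
  moreover have "card (lam_ker_series (card A)) \<le> card A"
    using subset_A fin by (rule card_mono[rotated])
  ultimately show ?thesis
    using not_le by blast
qed

end

lemma quotient_full_relation: "A \<noteq> {} \<Longrightarrow> A // (A \<times> A) = {A}"
  by (auto simp: quotient_def)

theorem mainTheorem5: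
  fixes A :: "'a set" and pl circ :: "'a \<Rightarrow> 'a \<Rightarrow> 'a" and z u g :: 'a and S :: "'a set"
  assumes "left_brace A pl z circ u"
    and "finite A"
    and "cyclic_group (addG A pl z)"
    and "transitive_cycle_base A pl z circ S"
    and "g \<in> S"
  shows "finite_mpl A (decomp_cs_op A pl z circ)
       \<and> finite_mpl A (unicon_cs_op A pl z circ u g)
       \<and> mpl A (decomp_cs_op A pl z circ) = mpl A (unicon_cs_op A pl z circ u g)
       \<and> (\<forall>n. fst (Ret_iter A (decomp_cs_op A pl z circ) n)
              = fst (Ret_iter A (unicon_cs_op A pl z circ u g) n))"
proof -
  interpret brace A pl z circ u
    by (rule brace.intro) (fact assms(1))
  interpret cycle_base_brace A pl z circ u S g
  proof unfold_locales
    show "lam a (lam b d) = lam b (lam a d)" if "a \<in> A" "b \<in> A" "d \<in> A" for a b d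
      using additive.cyclic_group_endomorphisms_commute[OF assms(3) lam_hom lam_hom] that by simp
  qed (fact assms)+
  have same_Ret: "fst (Ret_iter A (decomp_cs_op A pl z circ) n)
      = fst (Ret_iter A (unicon_cs_op A pl z circ u g) n)" for n
    by (simp add: Ret_iter_decomp_cs_op Ret_iter_unicon_cs_op)
  obtain n where "lam_ker_series n = A"
    using lam_ker_series_eventually_carrier assms(2) by blast
  moreover have "A \<noteq> {}"
    using zero_closed by blast
  ultimately have "card (fst (Ret_iter A (decomp_cs_op A pl z circ) n)) = 1"
    by (simp add: Ret_iter_decomp_cs_op mod_rel_carrier quotient_full_relation)
  then show ?thesis
    using same_Ret by (auto simp: finite_mpl_def mpl_def)
qed

end
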